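(* Let $\mathcal{D}$ be a dataset of $N$ points, $V$ a performance metric, $\mathcal{A}$ a learning algorithm, and $k^*$ a small-data threshold. For each $k<k^*$ let $\{\mathcal{A}_k^{(1)},\dots,\mathcal{A}_k^{(m_k)}\}$ be a set of allowed behaviors on coalitions of size exactly $k$, where each $m_k$ is bounded by a constant independent of $N$. Let $\mathcal{U}$ be the set of all utilities $U^{\mathbf b}$, indexed by choices $\mathbf b=(b_0,\dots,b_{k^*-1})$ made independently for each cardinality, defined by $U^{\mathbf b}(S)=V(\mathcal{A}(S))$ if $|S|\ge k^*$ and $U^{\mathbf b}(S)=V(\mathcal{A}_{|S|}^{(b_{|S|})}(S))$ if $|S|<k^*$ (so $\mathcal{U}\subseteq\mathcal{U}_{\mathrm{small}}(k^* )$), and assume $\mathcal{U}$ satisfies the bounded-range assumption. Then $\mathcal{U}$ is $(\epsilon,\delta)$-gameable under the aggregate-value favorability $F_{\mathrm{agg}}(\psi(U);P)$ for any $P\subseteq\mathcal{D}$.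
   Context: A learning algorithm $\mathcal{A}$ maps subsets of $\mathcal{D}$ to models; a performance metric $V$ maps models to $\mathbb{R}$; utilities are $U=V\circ\mathcal{A}:2^{\mathcal{D}}\to\mathbb{R}$. The small-data ambiguity set is $\mathcal{U}_{\mathrm{small}}(k^* )=\{V\circ\mathcal{A}' : \mathcal{A}'(S)=\mathcal{A}(S)\ \forall S\subseteq\mathcal{D},\ |S|\ge k^*\}$. Fix non-negative weights $w_0,\dots,w_{N-1}$ with $\sum_{S\subseteq\mathcal{D}\setminus\{i\}}w_{|S|}=1$; the semivalue is $\psi_i(U)=\sum_{S\subseteq\mathcal{D}\setminus\{i\}}w_{|S|}[U(S\cup\{i\})-U(S)]$, and $F_{\mathrm{agg}}(\psi(U);P)=\sum_{i\in P}\psi_i(U)$. Bounded-range assumption (standing): there is a finite $r$ with $\max_{S}U(S)-\min_{S}U(S)\le r$ for all $U\in\mathcal{U}$. A class $\mathcal{U}$ is $(\epsilon,\delta)$-gameable under favorability $F$ if there exists an algorithm that, for any $P\subseteq\mathcal{D}$, returns $U\in\mathcal{U}$ such that with probability at least $1-\delta$, $|F(\psi(U),P)-\max_{U'\in\mathcal{U}}F(\psi(U'),P)|<\epsilon$, using at most $O(\mathrm{poly}(N)\log(1/\delta)/\epsilon^2)$ utility function evaluations. *)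

theory Defs
  imports "HOL-Probability.Probability"
begin

text \<open>A randomized algorithm with oracle access: it may return a result, query the
oracle on a question of type 'q (receiving a real answer), or draw a uniformly random
number from {0..n}.\<close>

datatype ('q, 'a) qalg =
    Ret 'a
  | Qry 'q "real \<Rightarrow> ('q, 'a) qalg"
  | Smp nat "nat \<Rightarrow> ('q, 'a) qalg"

primrec run_alg :: "('q \<Rightarrow> real) \<Rightarrow> ('q, 'a) qalg \<Rightarrow> 'a pmf" where
  "run_alg orc (Ret a) = return_pmf a"
| "run_alg orc (Qry q k) = run_alg orc (k (orc q))"
| "run_alg orc (Smp n k) = bind_pmf (pmf_of_set {0..n}) (\<lambda>i. run_alg orc (k i))"

primrec num_queries :: "('q \<Rightarrow> real) \<Rightarrow> ('q, 'a) qalg \<Rightarrow> nat" where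
  "num_queries orc (Ret a) = 0"
| "num_queries orc (Qry q k) = Suc (num_queries orc (k (orc q)))"
| "num_queries orc (Smp n k) = Max ((\<lambda>i. num_queries orc (k i)) ` {0..n})"

text \<open>Dataset D = {0..<N}. The utility U^b: V(A S) on large coalitions,
V(Alt |S| (b |S|) S) on coalitions of size below kstar.\<close>
definition util :: "nat \<Rightarrow> (nat set \<Rightarrow> 'm) \<Rightarrow> ('m \<Rightarrow> real)
    \<Rightarrow> (nat \<Rightarrow> nat \<Rightarrow> nat set \<Rightarrow> 'm) \<Rightarrow> (nat \<Rightarrow> nat) \<Rightarrow> nat set \<Rightarrow> real" where
  "util kstar A V Alt b S =
     (if kstar \<le> card S then V (A S) else V (Alt (card S) (b (card S)) S))"

definition valid_choice :: "nat \<Rightarrow> (nat \<Rightarrow> nat) \<Rightarrow> (nat \<Rightarrow> nat) \<Rightarrow> bool" where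
  "valid_choice kstar m b \<longleftrightarrow> (\<forall>k<kstar. b k < m k)"

definition util_class :: "nat \<Rightarrow> (nat set \<Rightarrow> 'm) \<Rightarrow> ('m \<Rightarrow> real)
    \<Rightarrow> (nat \<Rightarrow> nat \<Rightarrow> nat set \<Rightarrow> 'm) \<Rightarrow> (nat \<Rightarrow> nat) \<Rightarrow> (nat set \<Rightarrow> real) set" where
  "util_class kstar A V Alt m = {util kstar A V Alt b | b. valid_choice kstar m b}"

definition semivalue :: "nat \<Rightarrow> (nat \<Rightarrow> real) \<Rightarrow> (nat set \<Rightarrow> real) \<Rightarrow> nat \<Rightarrow> real" where
  "semivalue N w U i =
     (\<Sum>S\<in>Pow ({0..<N} - {i}). w (card S) * (U (insert i S) - U S))"

definition F_agg :: "nat \<Rightarrow> (nat \<Rightarrow> real) \<Rightarrow> (nat set \<Rightarrow> real) \<Rightarrow> nat set \<Rightarrow> real" where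
  "F_agg N w U P = (\<Sum>i\<in>P. semivalue N w U i)"

definition semivalue_weights :: "nat \<Rightarrow> (nat \<Rightarrow> real) \<Rightarrow> bool" where
  "semivalue_weights N w \<longleftrightarrow> (\<forall>k<N. 0 \<le> w k) \<and>
     (\<forall>i<N. (\<Sum>S\<in>Pow ({0..<N} - {i}). w (card S)) = 1)"

definition bounded_range :: "nat \<Rightarrow> (nat set \<Rightarrow> real) set \<Rightarrow> real \<Rightarrow> bool" where
  "bounded_range N \<U> r \<longleftrightarrow>
     (\<forall>U\<in>\<U>. \<forall>S T. S \<subseteq> {0..<N} \<longrightarrow> T \<subseteq> {0..<N} \<longrightarrow> U S - U T \<le> r)"

definition util_oracle :: "nat \<Rightarrow> nat \<Rightarrow> (nat set \<Rightarrow> 'm) \<Rightarrow> ('m \<Rightarrow> real)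
    \<Rightarrow> (nat \<Rightarrow> nat \<Rightarrow> nat set \<Rightarrow> 'm) \<Rightarrow> (nat \<Rightarrow> nat) \<Rightarrow> (nat \<Rightarrow> nat) \<times> nat set \<Rightarrow> real" where
  "util_oracle N kstar A V Alt m q =
     (case q of (b, S) \<Rightarrow>
        if valid_choice kstar m b \<and> S \<subseteq> {0..<N} then util kstar A V Alt b S else 0)"

end

theory Submission
  imports Defs
begin

text \<open>The favorability F is linear in the utility, and the utilities of the
class differ only through the behaviours b k chosen on coalitions of size k < kstar, one choice
per size. Hence F(U^b) = F(U^0) + \<Sum>k g k (b k), where the gain g k j of switching level k
to behaviour j is an average over the (N choose k) coalitions of size k of terms bounded by
2 r N: the semivalue weights of the coalitions containing (resp. avoiding) a fixed point sum to
at most 1, so (N choose k) times the coefficient of a coalition is at most N. Sampling O(r^2 N^4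
log(N M / \<delta>) / \<epsilon>^2) coalitions per level and evaluating all behaviours on them,
Hoeffding's inequality and a union bound make every empirical gain
\<epsilon>/(4(N+1))-accurate with probability 1 - \<delta>; choosing the empirically best behaviour
on each level then loses at most \<epsilon>/2 against the optimum.\<close>

section \<open>The favorability as a linear functional\<close>

definition agg_coeff :: "(nat \<Rightarrow> real) \<Rightarrow> nat set \<Rightarrow> nat set \<Rightarrow> real" where
  "agg_coeff w P T = w (card T - 1) * real (card (P \<inter> T)) - w (card T) * real (card (P - T))"

lemma sum_Pow_Diff_insert:
  assumes "finite D" "i \<in> D"
  shows "(\<Sum>S\<in>Pow (D - {i}). f (card S) (insert i S)) = (\<Sum>T\<in>{T\<in>Pow D. i \<in> T}. f (card T - 1) T)"
proof -
  have "{T\<in>Pow D. i \<in> T} = insert i ` Pow (D - {i})"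
    using assms(2) by (auto intro!: image_eqI[where x = "_ - {i}"])
  moreover have "inj_on (insert i) (Pow (D - {i}))"
    by (auto simp: inj_on_def)
  ultimately have "(\<Sum>T\<in>{T\<in>Pow D. i \<in> T}. f (card T - 1) T)
      = (\<Sum>S\<in>Pow (D - {i}). f (card (insert i S) - 1) (insert i S))"
    by (simp add: sum.reindex)
  also have "\<dots> = (\<Sum>S\<in>Pow (D - {i}). f (card S) (insert i S))"
  proof (rule sum.cong[OF refl])
    fix S assume "S \<in> Pow (D - {i})"
    then have "finite S" "i \<notin> S"
      using assms(1) finite_subset[of S D] by auto
    then show "f (card (insert i S) - 1) (insert i S) = f (card S) (insert i S)"
      by simp
  qed
  finally show ?thesis
    by simp
qed

lemma sum_sum_restrict_swap_card:
  assumes "finite P" "finite \<T>"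
  shows "(\<Sum>i\<in>P. \<Sum>T\<in>{T\<in>\<T>. Q i T}. f T) = (\<Sum>T\<in>\<T>. real (card {i\<in>P. Q i T}) * f T)"
  using sum.swap_restrict[OF assms, of "\<lambda>_ T. f T" Q] by simp

lemma F_agg_eq_sum_agg_coeff:
  assumes "P \<subseteq> {0..<N}"
  shows "F_agg N w U P = (\<Sum>T\<in>Pow {0..<N}. agg_coeff w P T * U T)"
proof -
  let ?D = "{0..<N}"
  have fin: "finite P" "finite (Pow ?D)"
    using assms finite_subset by auto
  have with_i: "(\<Sum>S\<in>Pow (?D - {i}). w (card S) * U (insert i S))
      = (\<Sum>T\<in>{T\<in>Pow ?D. i \<in> T}. w (card T - 1) * U T)" if "i \<in> P" for i
    using that assms sum_Pow_Diff_insert[of ?D i "\<lambda>c T. w c * U T"] by auto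
  have without_i: "Pow (?D - {i}) = {T\<in>Pow ?D. i \<notin> T}" for i
    by auto
  have "F_agg N w U P = (\<Sum>i\<in>P. \<Sum>S\<in>Pow (?D - {i}). w (card S) * U (insert i S))
      - (\<Sum>i\<in>P. \<Sum>S\<in>Pow (?D - {i}). w (card S) * U S)"
    by (simp add: F_agg_def semivalue_def right_diff_distrib sum_subtractf)
  also have "(\<Sum>i\<in>P. \<Sum>S\<in>Pow (?D - {i}). w (card S) * U (insert i S))
      = (\<Sum>i\<in>P. \<Sum>T\<in>{T\<in>Pow ?D. i \<in> T}. w (card T - 1) * U T)"
    using with_i by (rule sum.cong[OF refl])
  also have "(\<Sum>i\<in>P. \<Sum>S\<in>Pow (?D - {i}). w (card S) * U S)
      = (\<Sum>i\<in>P. \<Sum>T\<in>{T\<in>Pow ?D. i \<notin> T}. w (card T) * U T)"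
    by (simp only: without_i)
  also have "(\<Sum>i\<in>P. \<Sum>T\<in>{T\<in>Pow ?D. i \<in> T}. w (card T - 1) * U T)
      - (\<Sum>i\<in>P. \<Sum>T\<in>{T\<in>Pow ?D. i \<notin> T}. w (card T) * U T)
      = (\<Sum>T\<in>Pow ?D. agg_coeff w P T * U T)"
    unfolding sum_sum_restrict_swap_card[OF fin]
    by (simp add: agg_coeff_def Int_def set_diff_eq algebra_simps sum_subtractf)
  finally show ?thesis .
qed

definition coalitions :: "nat \<Rightarrow> nat \<Rightarrow> nat set set" where
  "coalitions N k = {T. T \<subseteq> {0..<N} \<and> card T = k}"

lemma finite_coalitions [simp]: "finite (coalitions N k)"
  unfolding coalitions_def by (rule finite_subset[of _ "Pow {0..<N}"]) auto

lemma card_coalitions: "card (coalitions N k) = N choose k"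
  unfolding coalitions_def using n_subsets[of "{0..<N}" k] by simp

lemma coalitions_nonempty: "k \<le> N \<Longrightarrow> coalitions N k \<noteq> {}"
  unfolding coalitions_def by (auto intro!: exI[of _ "{0..<k}"])

lemma semivalue_weight_binomial_le:
  assumes w: "semivalue_weights N w" and s: "s < N"
  shows "real (N - 1 choose s) * w s \<le> 1"
proof -
  let ?E = "{0..<N} - {0}"
  have card_E: "card ?E = N - 1"
    using s by simp
  have "real (N - 1 choose s) * w s = (\<Sum>S\<in>{S. S \<subseteq> ?E \<and> card S = s}. w (card S))"
    using n_subsets[of ?E s] card_E by simp
  also have "\<dots> \<le> (\<Sum>S\<in>Pow ?E. w (card S))"
  proof (rule sum_mono2)
    show "0 \<le> w (card S)" if "S \<in> Pow ?E - {S. S \<subseteq> ?E \<and> card S = s}" for S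
    proof -
      have "card S \<le> N - 1"
        using that card_mono[of ?E S] card_E by auto
      then show ?thesis
        using w s unfolding semivalue_weights_def by auto
    qed
  qed auto
  also have "\<dots> = 1"
    using w s unfolding semivalue_weights_def by auto
  finally show ?thesis .
qed

lemma binomial_weight_inserted_le:
  assumes w: "semivalue_weights N w" and T: "T \<in> coalitions N k"
  shows "0 \<le> w (k - 1) * real (card (P \<inter> T))
    \<and> real (N choose k) * (w (k - 1) * real (card (P \<inter> T))) \<le> real N"
proof (cases "k = 0")
  case True
  then show ?thesis
    using T by (auto simp: coalitions_def dest: finite_subset)
next
  case False
  have TD: "T \<subseteq> {0..<N}" and card_T: "card T = k"
    using T by (auto simp: coalitions_def)
  have kN: "k \<le> N"
    using card_mono[OF _ TD] card_T by simp
  have w_nonneg: "0 \<le> w (k - 1)"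
    using w False kN unfolding semivalue_weights_def by auto
  have "real (card (P \<inter> T)) \<le> real k"
    using card_T TD by (metis Int_lower2 card_mono finite_atLeastLessThan finite_subset of_nat_mono)
  then have "real (N choose k) * (w (k - 1) * real (card (P \<inter> T)))
      \<le> real (N choose k) * (w (k - 1) * real k)"
    using w_nonneg by (intro mult_left_mono) auto
  also have "\<dots> = real N * (real (N - 1 choose (k - 1)) * w (k - 1))"
  proof -
    have "k * (N choose k) = N * (N - 1 choose (k - 1))"
      using binomial_absorption[of "k - 1" N] False by simp
    then show ?thesis
      by (metis (no_types, lifting) mult.assoc mult.commute of_nat_mult)
  qed
  also have "\<dots> \<le> real N"
    using semivalue_weight_binomial_le[OF w, of "k - 1"] False kN by (simp add: mult_left_le)
  finally show ?thesis
    using w_nonneg by simp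
qed

lemma binomial_weight_removed_le:
  assumes w: "semivalue_weights N w" and P: "P \<subseteq> {0..<N}" and T: "T \<in> coalitions N k"
  shows "0 \<le> w k * real (card (P - T)) \<and> real (N choose k) * (w k * real (card (P - T))) \<le> real N"
proof -
  have TD: "T \<subseteq> {0..<N}" and card_T: "card T = k"
    using T by (auto simp: coalitions_def)
  have fin_T: "finite T"
    using TD finite_subset by blast
  show ?thesis
  proof (cases "k < N")
    case False
    then have "T = {0..<N}"
      using TD card_T card_mono[OF _ TD] by (simp add: card_subset_eq)
    then have no_player_outside: "P - T = {}"
      using P by blast
    show ?thesis
      unfolding no_player_outside by simp
  next
    case True
    have w_nonneg: "0 \<le> w k"
      using w True unfolding semivalue_weights_def by auto
    have "card (P - T) \<le> N - k"
      using card_mono[of "{0..<N} - T" "P - T"] P TD card_T fin_T by (auto simp: card_Diff_subset)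
    then have "real (N choose k) * (w k * real (card (P - T))) \<le> real (N choose k) * (w k * real (N - k))"
      using w_nonneg by (intro mult_left_mono of_nat_mono) auto
    also have "\<dots> = real N * (real (N - 1 choose k) * w k)"
      using binomial_absorb_comp[of N k]
      by (metis (no_types, lifting) mult.assoc mult.commute of_nat_mult)
    also have "\<dots> \<le> real N"
      using semivalue_weight_binomial_le[OF w True] by (simp add: mult_left_le)
    finally show ?thesis
      using w_nonneg by simp
  qed
qed

lemma binomial_agg_coeff_le:
  assumes w: "semivalue_weights N w" and P: "P \<subseteq> {0..<N}" and T: "T \<in> coalitions N k"
  shows "real (N choose k) * \<bar>agg_coeff w P T\<bar> \<le> real N"
proof -
  define a where "a = w (k - 1) * real (card (P \<inter> T))"
  define b where "b = w k * real (card (P - T))"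
  have a: "0 \<le> a \<and> real (N choose k) * a \<le> real N"
    unfolding a_def by (rule binomial_weight_inserted_le[OF w T])
  have b: "0 \<le> b \<and> real (N choose k) * b \<le> real N"
    unfolding b_def by (rule binomial_weight_removed_le[OF w P T])
  have "agg_coeff w P T = a - b"
    using T by (simp add: agg_coeff_def a_def b_def coalitions_def)
  moreover have "\<bar>a - b\<bar> \<le> max a b"
    using a b by auto
  ultimately have "real (N choose k) * \<bar>agg_coeff w P T\<bar> \<le> real (N choose k) * max a b"
    by (simp add: mult_left_mono)
  also have "\<dots> \<le> real N"
    using a b by (simp add: max_def)
  finally show ?thesis .
qed

lemma arg_max_on_finite:
  fixes f :: "'a \<Rightarrow> 'b::linorder"
  assumes "finite S" "S \<noteq> {}"
  shows arg_max_on_in: "arg_max_on f S \<in> S"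
    and arg_max_on_greatest: "x \<in> S \<Longrightarrow> f x \<le> f (arg_max_on f S)"
proof -
  have "Max (f ` S) \<in> f ` S"
    using assms by simp
  then obtain x0 where x0: "x0 \<in> S" "f x0 = Max (f ` S)"
    by (metis imageE)
  have greatest: "f y \<le> f x0" if "y \<in> S" for y
    using that assms x0(2) by simp
  have "arg_max_on f S \<in> S \<and> (\<forall>y\<in>S. f y \<le> f (arg_max_on f S))"
    unfolding arg_max_on_def
    by (rule arg_maxI[where P = "\<lambda>x. x \<in> S" and x = x0
        and Q = "\<lambda>x. x \<in> S \<and> (\<forall>y\<in>S. f y \<le> f x)"]) (auto simp: x0(1) greatest not_less)
  then show "arg_max_on f S \<in> S" and "x \<in> S \<Longrightarrow> f x \<le> f (arg_max_on f S)"
    by auto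
qed

lemma sum_greedy_choice_near_optimal:
  fixes g e :: "'k \<Rightarrow> 'j \<Rightarrow> real"
  assumes b: "\<And>k. k \<in> K \<Longrightarrow> b k \<in> C k" and b': "\<And>k. k \<in> K \<Longrightarrow> b' k \<in> C k"
    and greedy: "\<And>k j. k \<in> K \<Longrightarrow> j \<in> C k \<Longrightarrow> e k j \<le> e k (b' k)"
    and accurate: "\<And>k j. k \<in> K \<Longrightarrow> j \<in> C k \<Longrightarrow> \<bar>e k j - g k j\<bar> \<le> \<eta>"
  shows "(\<Sum>k\<in>K. g k (b k)) - (\<Sum>k\<in>K. g k (b' k)) \<le> 2 * \<eta> * card K"
proof -
  have "g k (b k) - g k (b' k) \<le> 2 * \<eta>" if k: "k \<in> K" for k
    using greedy[OF k b[OF k]] accurate[OF k b[OF k]] accurate[OF k b'[OF k]] by (simp add: abs_le_iff)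
  then have "(\<Sum>k\<in>K. g k (b k) - g k (b' k)) \<le> (\<Sum>k\<in>K. 2 * \<eta>)"
    by (rule sum_mono)
  then show ?thesis
    by (simp add: sum_subtractf mult.commute)
qed

primrec query_all :: "'q list \<Rightarrow> (('q \<Rightarrow> real) \<Rightarrow> 'a) \<Rightarrow> ('q, 'a) qalg" where
  "query_all [] f = Ret (f (\<lambda>_. 0))"
| "query_all (q # qs) f = Qry q (\<lambda>x. query_all qs (\<lambda>h. f (h(q := x))))"

lemma run_query_all:
  "run_alg orc (query_all qs f) = return_pmf (f (\<lambda>q. if q \<in> set qs then orc q else 0))"
proof (induction qs arbitrary: f)
  case Nil
  then show ?case by simp
next
  case (Cons q qs)
  have "(\<lambda>q'. if q' \<in> set qs then orc q' else 0)(q := orc q)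
      = (\<lambda>q'. if q' \<in> set (q # qs) then orc q' else 0)"
    by (auto simp: fun_eq_iff)
  then show ?case
    using Cons by simp
qed

lemma num_queries_query_all: "num_queries orc (query_all qs f) = length qs"
  by (induction qs arbitrary: f) auto

definition sample_uniform :: "'b set \<Rightarrow> ('b \<Rightarrow> ('q, 'a) qalg) \<Rightarrow> ('q, 'a) qalg" where
  "sample_uniform S f =
     (let xs = (SOME xs. set xs = S \<and> distinct xs) in Smp (length xs - 1) (\<lambda>i. f (xs ! i)))"

lemma sample_uniform_enumeration:
  assumes "finite S" "S \<noteq> {}"
  obtains xs where "set xs = S" "distinct xs" "xs \<noteq> []"
    and "sample_uniform S f = Smp (length xs - 1) (\<lambda>i. f (xs ! i))"
proof -
  define xs where "xs = (SOME xs. set xs = S \<and> distinct xs)"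
  have "set xs = S \<and> distinct xs"
    unfolding xs_def using finite_distinct_list[OF assms(1)] by (rule someI_ex)
  then show ?thesis
    using that assms(2) by (auto simp: sample_uniform_def xs_def[symmetric])
qed

lemma run_sample_uniform:
  assumes "finite S" "S \<noteq> {}"
  shows "run_alg orc (sample_uniform S f) = pmf_of_set S \<bind> (\<lambda>x. run_alg orc (f x))"
proof -
  obtain xs where xs: "set xs = S" "distinct xs" "xs \<noteq> []"
    and alg: "sample_uniform S f = Smp (length xs - 1) (\<lambda>i. f (xs ! i))"
    using sample_uniform_enumeration[OF assms] .
  have indices: "{0..length xs - Suc 0} = {0..<length xs}"
    using xs(3) by (cases xs) auto
  have "pmf_of_set S = map_pmf ((!) xs) (pmf_of_set {0..<length xs})"
    using xs by (subst map_pmf_of_set_inj) (auto simp: inj_on_nth nth_image)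
  then show ?thesis
    by (simp add: alg indices bind_map_pmf)
qed

lemma num_queries_sample_uniform_le:
  assumes "finite S" "S \<noteq> {}" "\<And>x. x \<in> S \<Longrightarrow> num_queries orc (f x) \<le> n"
  shows "num_queries orc (sample_uniform S f) \<le> n"
proof -
  obtain xs where xs: "set xs = S" "xs \<noteq> []"
    and alg: "sample_uniform S f = Smp (length xs - 1) (\<lambda>i. f (xs ! i))"
    using sample_uniform_enumeration[OF assms(1,2)] by metis
  have "xs ! i \<in> S" if "i \<in> {0..length xs - 1}" for i
  proof -
    have "i < length xs"
      using that xs(2) by (cases xs) auto
    then show ?thesis
      using xs(1) nth_mem by blast
  qed
  then show ?thesis
    by (simp add: alg assms(3))
qed

section \<open>Probability bounds for sampling\<close>

lemma measure_map_pmf_ge_of_exception: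
  assumes "measure_pmf.prob Q X \<le> \<delta>" and "\<And>x. x \<in> set_pmf Q \<Longrightarrow> x \<notin> X \<Longrightarrow> f x \<in> E"
  shows "1 - \<delta> \<le> measure_pmf.prob (map_pmf f Q) E"
proof -
  have "1 - \<delta> \<le> measure_pmf.prob Q (UNIV - X)"
    using assms(1) measure_pmf.prob_compl[of X Q] by simp
  also have "\<dots> = measure_pmf.prob Q ((UNIV - X) \<inter> set_pmf Q)"
    by (rule measure_Int_set_pmf[symmetric])
  also have "\<dots> \<le> measure_pmf.prob Q (f -` E)"
    using assms(2) by (intro measure_pmf.finite_measure_mono) auto
  finally show ?thesis
    by simp
qed

lemma Pi_pmf_sum_deviation:
  fixes Z :: "'b \<Rightarrow> real" and J :: "'i set" and B t :: real
  assumes I: "finite I" and J: "J \<subseteq> I" "J \<noteq> {}"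
    and identical: "\<And>i. i \<in> J \<Longrightarrow> p i = q"
    and bounded: "\<And>y. y \<in> set_pmf q \<Longrightarrow> \<bar>Z y\<bar> \<le> B" and B: "0 < B" and t: "0 \<le> t"
  shows "measure_pmf.prob (Pi_pmf I d p)
           {\<omega>. t \<le> \<bar>(\<Sum>i\<in>J. Z (\<omega> i)) - card J * measure_pmf.expectation q Z\<bar>}
         \<le> 2 * exp (- (t\<^sup>2 / (2 * card J * B\<^sup>2)))"
proof -
  define Q where "Q = Pi_pmf I d p"
  have fin_J: "finite J"
    using I J finite_subset by blast
  have indep: "prob_space.indep_vars (measure_pmf Q) (\<lambda>_. borel) (\<lambda>i \<omega>. Z (\<omega> i)) J"
    unfolding Q_def
    by (rule prob_space.indep_vars_compose2[OF measure_pmf.prob_space_axioms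
          prob_space.indep_vars_subset[OF measure_pmf.prob_space_axioms indep_vars_Pi_pmf[OF I] J(1)]])
      auto
  have component: "map_pmf (\<lambda>\<omega>. \<omega> i) Q = q" if "i \<in> J" for i
    using Pi_pmf_component[OF I, of i d p] that J identical by (auto simp: Q_def)
  have expectation: "measure_pmf.expectation Q (\<lambda>\<omega>. Z (\<omega> i)) = measure_pmf.expectation q Z"
    if "i \<in> J" for i
    using component[OF that] by (metis integral_map_pmf)
  interpret Hoeffding_ineq "measure_pmf Q" J "\<lambda>i \<omega>. Z (\<omega> i)" "\<lambda>_. -B" "\<lambda>_. B"
    "\<Sum>i\<in>J. measure_pmf.expectation Q (\<lambda>\<omega>. Z (\<omega> i))"
  proof unfold_locales
    fix i assume i: "i \<in> J"
    show "AE \<omega> in measure_pmf Q. Z (\<omega> i) \<in> {-B..B}"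
    proof (rule AE_pmfI)
      fix \<omega> assume "\<omega> \<in> set_pmf Q"
      then have "\<omega> i \<in> set_pmf q"
        using component[OF i] by (metis pmf.set_map imageI)
      then show "Z (\<omega> i) \<in> {-B..B}"
        using bounded[of "\<omega> i"] by (auto simp: abs_le_iff)
    qed
  qed (use fin_J indep in auto)
  have "(\<Sum>i\<in>J. (B - - B)\<^sup>2) = 4 * card J * B\<^sup>2"
    by (simp add: power2_eq_square)
  moreover have "0 < card J"
    using fin_J J by (simp add: card_gt_0_iff)
  ultimately show ?thesis
    using Hoeffding_ineq_abs_ge[of t] t B
    by (simp add: Q_def[symmetric] expectation power2_eq_square mult_ac)
qed

lemma Pi_pmf_sample_mean_deviation:
  fixes Z :: "'b \<Rightarrow> real" and J :: "'i set" and B \<eta> :: real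
  assumes I: "finite I" and J: "J \<subseteq> I" "J \<noteq> {}"
    and identical: "\<And>i. i \<in> J \<Longrightarrow> p i = q"
    and bounded: "\<And>y. y \<in> set_pmf q \<Longrightarrow> \<bar>Z y\<bar> \<le> B" and B: "0 < B" and \<eta>: "0 \<le> \<eta>"
  shows "measure_pmf.prob (Pi_pmf I d p)
           {\<omega>. \<eta> \<le> \<bar>(\<Sum>i\<in>J. Z (\<omega> i)) / card J - measure_pmf.expectation q Z\<bar>}
         \<le> 2 * exp (- (card J * \<eta>\<^sup>2 / (2 * B\<^sup>2)))"
proof -
  define n where "n = real (card J)"
  have n: "0 < n"
    using I J finite_subset by (fastforce simp: n_def card_gt_0_iff)
  have "\<bar>x / n - y\<bar> = \<bar>x - n * y\<bar> / n" for x y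
    using n by (simp add: field_simps)
  then have "{\<omega>. \<eta> \<le> \<bar>(\<Sum>i\<in>J. Z (\<omega> i)) / n - measure_pmf.expectation q Z\<bar>}
      = {\<omega>. n * \<eta> \<le> \<bar>(\<Sum>i\<in>J. Z (\<omega> i)) - n * measure_pmf.expectation q Z\<bar>}"
    using n by (auto simp: pos_le_divide_eq mult.commute)
  moreover have "(n * \<eta>)\<^sup>2 / (2 * n * B\<^sup>2) = n * \<eta>\<^sup>2 / (2 * B\<^sup>2)"
    using n by (simp add: power2_eq_square)
  ultimately show ?thesis
    using Pi_pmf_sum_deviation[OF assms(1-6), where t = "n * \<eta>" and d = d] n \<eta> by (simp add: n_def)
qed

section \<open>The greedy estimator\<close>

text \<open>A sample \<omega> fixes, for every level k < min (N + 1) kstar and every l < L, a coalition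
  \<omega> (k, l) of size k; every behaviour j < m k of level k is queried on these coalitions, and
  j = 0 also provides the baseline (\<lambda>_. 0).\<close>

definition coalition_samples :: "nat \<Rightarrow> nat \<Rightarrow> nat \<Rightarrow> (nat \<times> nat \<Rightarrow> nat set) set" where
  "coalition_samples N kstar L =
     PiE_dflt ({..<min (Suc N) kstar} \<times> {..<L}) {} (\<lambda>x. coalitions N (fst x))"

definition sample_queries :: "nat \<Rightarrow> nat \<Rightarrow> (nat \<Rightarrow> nat) \<Rightarrow> nat \<Rightarrow> (nat \<times> nat \<Rightarrow> nat set)
    \<Rightarrow> ((nat \<Rightarrow> nat) \<times> nat set) list" where
  "sample_queries N kstar m L \<omega> =
     [((\<lambda>_. 0)(k := j), \<omega> (k, l)). k \<leftarrow> [0..<min (Suc N) kstar], l \<leftarrow> [0..<L], j \<leftarrow> [0..<m k]]"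

definition gain_term :: "nat \<Rightarrow> (nat \<Rightarrow> real) \<Rightarrow> nat set \<Rightarrow> ((nat \<Rightarrow> nat) \<Rightarrow> nat set \<Rightarrow> real)
    \<Rightarrow> nat \<Rightarrow> nat \<Rightarrow> nat set \<Rightarrow> real" where
  "gain_term N w P u k j T =
     real (N choose k) * agg_coeff w P T * (u ((\<lambda>_. 0)(k := j)) T - u (\<lambda>_. 0) T)"

definition empirical_gain :: "nat \<Rightarrow> (nat \<Rightarrow> real) \<Rightarrow> nat set \<Rightarrow> nat \<Rightarrow> (nat \<times> nat \<Rightarrow> nat set)
    \<Rightarrow> ((nat \<Rightarrow> nat) \<times> nat set \<Rightarrow> real) \<Rightarrow> nat \<Rightarrow> nat \<Rightarrow> real" where
  "empirical_gain N w P L \<omega> h k j = (\<Sum>x\<in>{k} \<times> {..<L}. gain_term N w P (curry h) k j (\<omega> x)) / L"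

definition greedy_choice :: "nat \<Rightarrow> (nat \<Rightarrow> nat) \<Rightarrow> (nat \<Rightarrow> real) \<Rightarrow> nat set \<Rightarrow> nat
    \<Rightarrow> (nat \<times> nat \<Rightarrow> nat set) \<Rightarrow> ((nat \<Rightarrow> nat) \<times> nat set \<Rightarrow> real) \<Rightarrow> nat \<Rightarrow> nat" where
  "greedy_choice N m w P L \<omega> h k = arg_max_on (empirical_gain N w P L \<omega> h k) {..<m k}"

definition sample_size :: "nat \<Rightarrow> real \<Rightarrow> nat \<Rightarrow> real \<Rightarrow> real \<Rightarrow> nat" where
  "sample_size M r N \<epsilon> \<delta> =
     nat \<lceil>128 * (r * real N * (real N + 1) / \<epsilon>)\<^sup>2 * ln (2 * ((real N + 1) * (real M + 1)) / \<delta>)\<rceil>"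

text \<open>If \<epsilon> exceeds 2 r N (N + 1), the total range of the level gains, every choice is
  \<epsilon>-optimal and no query is needed.\<close>

definition greedy_estimator :: "nat \<Rightarrow> real \<Rightarrow> nat \<Rightarrow> nat \<Rightarrow> (nat \<Rightarrow> nat) \<Rightarrow> (nat \<Rightarrow> real)
    \<Rightarrow> nat set \<Rightarrow> real \<Rightarrow> real \<Rightarrow> ((nat \<Rightarrow> nat) \<times> nat set, nat \<Rightarrow> nat) qalg" where
  "greedy_estimator M r N kstar m w P \<epsilon> \<delta> =
     (if 2 * r * real N * (real N + 1) < \<epsilon> then Ret (\<lambda>_. 0)
      else let L = sample_size M r N \<epsilon> \<delta> in
        sample_uniform (coalition_samples N kstar L)
          (\<lambda>\<omega>. query_all (sample_queries N kstar m L \<omega>) (greedy_choice N m w P L \<omega>)))"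

lemma finite_coalition_samples: "finite (coalition_samples N kstar L)"
  unfolding coalition_samples_def by (intro finite_PiE_dflt) auto

lemma coalition_samples_nonempty: "coalition_samples N kstar L \<noteq> {}"
  unfolding coalition_samples_def using coalitions_nonempty by auto

lemma pmf_of_set_coalition_samples:
  "pmf_of_set (coalition_samples N kstar L)
     = Pi_pmf ({..<min (Suc N) kstar} \<times> {..<L}) {} (\<lambda>x. pmf_of_set (coalitions N (fst x)))"
  unfolding coalition_samples_def by (rule Pi_pmf_of_set[symmetric]) (auto simp: coalitions_nonempty)

lemma length_sample_queries:
  "length (sample_queries N kstar m L \<omega>) = (\<Sum>k<min (Suc N) kstar. L * m k)"
  unfolding sample_queries_def
  by (simp add: length_concat o_def sum_list_triv atLeast0LessThan[symmetric]
      interv_sum_list_conv_sum_set_nat)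

lemma run_greedy_estimator:
  fixes M :: nat and r \<epsilon> \<delta> :: real
  assumes "\<not> 2 * r * real N * (real N + 1) < \<epsilon>"
  defines "L \<equiv> sample_size M r N \<epsilon> \<delta>"
  shows "run_alg orc (greedy_estimator M r N kstar m w P \<epsilon> \<delta>) =
    map_pmf (\<lambda>\<omega>. greedy_choice N m w P L \<omega>
        (\<lambda>q. if q \<in> set (sample_queries N kstar m L \<omega>) then orc q else 0))
      (pmf_of_set (coalition_samples N kstar L))"
  using assms
  by (simp add: greedy_estimator_def Let_def run_sample_uniform finite_coalition_samples
      coalition_samples_nonempty run_query_all map_pmf_def)

lemma greedy_choice_valid:
  assumes "\<And>k. k < kstar \<Longrightarrow> 0 < m k"
  shows "valid_choice kstar m (greedy_choice N m w P L \<omega> h)"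
proof -
  have "arg_max_on f {..<m k} < m k" if "k < kstar" for k and f :: "nat \<Rightarrow> real"
    using arg_max_on_in[of "{..<m k}" f] assms[OF that] by auto
  then show ?thesis
    unfolding valid_choice_def greedy_choice_def by blast
qed

lemma greedy_estimator_valid:
  assumes "\<And>k. k < kstar \<Longrightarrow> 0 < m k"
    and "b \<in> set_pmf (run_alg orc (greedy_estimator M r N kstar m w P \<epsilon> \<delta>))"
  shows "valid_choice kstar m b"
proof (cases "2 * r * real N * (real N + 1) < \<epsilon>")
  case True
  then show ?thesis
    using assms by (simp add: greedy_estimator_def valid_choice_def)
next
  case False
  then show ?thesis
    using assms by (auto simp: run_greedy_estimator greedy_choice_valid)
qed

lemma num_queries_greedy_estimator:
  assumes "\<And>k. k < kstar \<Longrightarrow> m k \<le> M" and "\<not> 2 * r * real N * (real N + 1) < \<epsilon>"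
  shows "num_queries orc (greedy_estimator M r N kstar m w P \<epsilon> \<delta>) \<le> Suc N * sample_size M r N \<epsilon> \<delta> * M"
proof -
  define L where "L = sample_size M r N \<epsilon> \<delta>"
  have "(\<Sum>k<min (Suc N) kstar. L * m k) \<le> (\<Sum>k<min (Suc N) kstar. L * M)"
    using assms(1) by (intro sum_mono) auto
  also have "\<dots> = min (Suc N) kstar * (L * M)"
    by simp
  also have "\<dots> \<le> Suc N * (L * M)"
    by (rule mult_le_mono1) simp
  finally have "num_queries orc (sample_uniform (coalition_samples N kstar L)
      (\<lambda>\<omega>. query_all (sample_queries N kstar m L \<omega>) (greedy_choice N m w P L \<omega>)))
      \<le> Suc N * (L * M)"
    by (intro num_queries_sample_uniform_le[OF finite_coalition_samples coalition_samples_nonempty])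
      (simp add: num_queries_query_all length_sample_queries)
  then show ?thesis
    using assms(2) by (simp add: greedy_estimator_def L_def[symmetric] algebra_simps)
qed

lemma ln_inverse_ge_half:
  fixes \<delta> :: real
  assumes "0 < \<delta>" "\<delta> \<le> 1/2"
  shows "1/2 \<le> ln (1 / \<delta>)"
proof -
  have "ln 2 \<le> ln (1 / \<delta>)"
    using assms by (subst ln_le_cancel_iff) (auto simp: field_simps)
  then show ?thesis
    using ln2_ge_two_thirds by linarith
qed

lemma ln_le_scaled_ln_inverse:
  fixes K \<delta> :: real
  assumes K: "1 \<le> K" and \<delta>: "0 < \<delta>" "\<delta> \<le> 1/2"
  shows "ln (2 * K / \<delta>) \<le> 5 * K * ln (1 / \<delta>)"
proof -
  define \<Lambda> where "\<Lambda> = ln (1 / \<delta>)"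
  have \<Lambda>: "1/2 \<le> \<Lambda>"
    unfolding \<Lambda>_def using \<delta> by (rule ln_inverse_ge_half)
  have "ln (2 * K / \<delta>) = ln (2 * K) + \<Lambda>"
    unfolding \<Lambda>_def using K \<delta> by (simp add: ln_div ln_mult)
  moreover have "ln (2 * K) \<le> 2 * K - 1"
    using K by (intro ln_le_minus_one) simp
  moreover have "4 * K * (1/2) \<le> 4 * K * \<Lambda>"
    using K \<Lambda> by (intro mult_left_mono) auto
  moreover have "1 * \<Lambda> \<le> K * \<Lambda>"
    using K \<Lambda> by (intro mult_right_mono) auto
  ultimately show ?thesis
    unfolding \<Lambda>_def[symmetric] by simp
qed

lemma sample_size_le:
  fixes M N :: nat and r \<epsilon> \<delta> :: real
  assumes \<epsilon>: "0 < \<epsilon>" "\<epsilon> \<le> 2 * r * real N * (real N + 1)" and \<delta>: "0 < \<delta>" "\<delta> \<le> 1/2"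
  defines "G \<equiv> (r * real N * (real N + 1) / \<epsilon>)\<^sup>2" and "K \<equiv> (real N + 1) * (real M + 1)"
  shows "real (sample_size M r N \<epsilon> \<delta>) \<le> 648 * G * K * ln (1 / \<delta>)"
proof -
  define \<Lambda> where "\<Lambda> = ln (1 / \<delta>)"
  have K: "1 \<le> K"
    unfolding K_def using mult_mono[of 1 "real N + 1" 1 "real M + 1"] by simp
  have \<Lambda>: "1/2 \<le> \<Lambda>"
    unfolding \<Lambda>_def using \<delta> by (rule ln_inverse_ge_half)
  have "1 \<le> 2 * (r * real N * (real N + 1)) / \<epsilon>"
    using \<epsilon> by (simp add: field_simps)
  then have "1 \<le> (2 * (r * real N * (real N + 1)) / \<epsilon>)\<^sup>2"
    by simp
  then have G: "1 \<le> 4 * G"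
    by (simp add: G_def power_divide power_mult_distrib)
  have ln_pos: "0 \<le> ln (2 * K / \<delta>)"
    using K \<delta> by simp
  have "real (sample_size M r N \<epsilon> \<delta>) \<le> 128 * G * ln (2 * K / \<delta>) + 1"
    using G ln_pos by (simp add: sample_size_def G_def K_def)
  also have "\<dots> \<le> 128 * G * (5 * K * \<Lambda>) + 4 * G * (2 * \<Lambda>)"
  proof -
    have "128 * G * ln (2 * K / \<delta>) \<le> 128 * G * (5 * K * \<Lambda>)"
      using ln_le_scaled_ln_inverse[OF K \<delta>] G unfolding \<Lambda>_def by (intro mult_left_mono) auto
    moreover have "1 * 1 \<le> 4 * G * (2 * \<Lambda>)"
      using G \<Lambda> by (intro mult_mono) auto
    ultimately show ?thesis
      by linarith
  qed
  also have "\<dots> \<le> 648 * G * K * \<Lambda>"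
  proof -
    have "8 * (G * \<Lambda>) * 1 \<le> 8 * (G * \<Lambda>) * K"
      using G \<Lambda> K by (intro mult_left_mono) auto
    then show ?thesis
      by (simp add: algebra_simps)
  qed
  finally show ?thesis
    unfolding \<Lambda>_def .
qed

lemma sample_size_pos:
  fixes M N :: nat and r \<epsilon> \<delta> :: real
  assumes "0 < \<epsilon>" "0 < r" "0 < N" "0 < \<delta>" "\<delta> \<le> 1/2"
  shows "0 < sample_size M r N \<epsilon> \<delta>"
proof -
  have "1 * 1 \<le> (real N + 1) * (real M + 1)"
    by (intro mult_mono) auto
  then have "1 < 2 * ((real N + 1) * (real M + 1)) / \<delta>"
    using assms by (simp add: less_divide_eq)
  then have "0 < 128 * (r * real N * (real N + 1) / \<epsilon>)\<^sup>2 * ln (2 * ((real N + 1) * (real M + 1)) / \<delta>)"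
    using assms by (intro mult_pos_pos) auto
  then show ?thesis
    by (simp add: sample_size_def)
qed

lemma sample_size_tail_le:
  fixes M N :: nat and r \<epsilon> \<delta> :: real
  assumes \<epsilon>: "0 < \<epsilon>" and r: "0 < r" and N: "0 < N" and \<delta>: "0 < \<delta>"
  shows "2 * exp (- (real (sample_size M r N \<epsilon> \<delta>) * (\<epsilon> / (4 * (real N + 1)))\<^sup>2
      / (2 * (2 * r * real N)\<^sup>2))) \<le> \<delta> / ((real N + 1) * (real M + 1))"
proof -
  define G where "G = (r * real N * (real N + 1) / \<epsilon>)\<^sup>2"
  define K where "K = (real N + 1) * (real M + 1)"
  define L where "L = real (sample_size M r N \<epsilon> \<delta>)"
  have G: "0 < G"
    using \<epsilon> r N by (simp add: G_def)
  have K: "0 < K"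
    by (simp add: K_def add_pos_pos)
  have "128 * G * ln (2 * K / \<delta>) \<le> L"
    unfolding L_def sample_size_def G_def K_def by (rule real_nat_ceiling_ge)
  moreover have "L * (\<epsilon> / (4 * (real N + 1)))\<^sup>2 / (2 * (2 * r * real N)\<^sup>2) = L / (128 * G)"
    using \<epsilon> r N
    by (simp add: G_def power_divide power_mult_distrib) (simp add: power2_eq_square algebra_simps)
  ultimately have "ln (2 * K / \<delta>) \<le> L * (\<epsilon> / (4 * (real N + 1)))\<^sup>2 / (2 * (2 * r * real N)\<^sup>2)"
    using G by (simp add: pos_le_divide_eq mult.commute)
  then have "exp (- (L * (\<epsilon> / (4 * (real N + 1)))\<^sup>2 / (2 * (2 * r * real N)\<^sup>2))) \<le> exp (- ln (2 * K / \<delta>))"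
    by simp
  also have "exp (- ln (2 * K / \<delta>)) = \<delta> / (2 * K)"
    using K \<delta> by (simp add: exp_minus)
  finally have "2 * exp (- (L * (\<epsilon> / (4 * (real N + 1)))\<^sup>2 / (2 * (2 * r * real N)\<^sup>2))) \<le> 2 * (\<delta> / (2 * K))"
    by simp
  also have "2 * (\<delta> / (2 * K)) = \<delta> / K"
    by simp
  finally show ?thesis
    by (simp only: L_def K_def)
qed

lemma query_budget_le:
  fixes M N :: nat and r \<epsilon> \<delta> :: real
  assumes \<epsilon>: "0 < \<epsilon>" "\<epsilon> \<le> 2 * r * real N * (real N + 1)" and \<delta>: "0 < \<delta>" "\<delta> \<le> 1/2"
  shows "real (Suc N * sample_size M r N \<epsilon> \<delta> * M)
    \<le> 10368 * (real M + 1)\<^sup>2 * r\<^sup>2 * real N ^ 6 * ln (1 / \<delta>) / \<epsilon>\<^sup>2"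
proof -
  define c where "c = r\<^sup>2 * ln (1 / \<delta>) / \<epsilon>\<^sup>2"
  have c: "0 \<le> c"
    unfolding c_def using ln_inverse_ge_half[OF \<delta>] by simp
  have N: "1 \<le> real N"
    using \<epsilon> by (cases N) auto
  have "real (Suc N * sample_size M r N \<epsilon> \<delta> * M) = (real N + 1) * real M * real (sample_size M r N \<epsilon> \<delta>)"
    by (simp add: algebra_simps)
  also have "\<dots> \<le> (real N + 1) * real M * (648 * (r * real N * (real N + 1) / \<epsilon>)\<^sup>2
      * ((real N + 1) * (real M + 1)) * ln (1 / \<delta>))"
    using sample_size_le[OF \<epsilon> \<delta>] by (intro mult_left_mono) auto
  also have "\<dots> = 648 * (real M * (real M + 1)) * (real N ^ 2 * (real N + 1) ^ 4) * c"
    by (simp add: c_def power2_eq_square field_simps eval_nat_numeral)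
  also have "\<dots> \<le> 648 * (real M + 1)\<^sup>2 * (real N ^ 2 * (2 * real N) ^ 4) * c"
  proof -
    have "real M * (real M + 1) \<le> (real M + 1)\<^sup>2"
      by (simp add: power2_eq_square)
    moreover have "(real N + 1) ^ 4 \<le> (2 * real N) ^ 4"
      using N by (intro power_mono) auto
    ultimately show ?thesis
      using c by (intro mult_right_mono mult_left_mono mult_mono) auto
  qed
  also have "\<dots> = 10368 * (real M + 1)\<^sup>2 * r\<^sup>2 * real N ^ 6 * ln (1 / \<delta>) / \<epsilon>\<^sup>2"
    by (simp add: c_def field_simps eval_nat_numeral)
  finally show ?thesis .
qed

lemma num_queries_greedy_estimator_le:
  fixes M :: nat and r \<epsilon> \<delta> :: real
  assumes "\<And>k. k < kstar \<Longrightarrow> m k \<le> M" and "0 < \<epsilon>" "0 < \<delta>" "\<delta> \<le> 1/2"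
  shows "real (num_queries orc (greedy_estimator M r N kstar m w P \<epsilon> \<delta>))
    \<le> 10368 * (real M + 1)\<^sup>2 * r\<^sup>2 * real N ^ 6 * ln (1 / \<delta>) / \<epsilon>\<^sup>2"
proof (cases "2 * r * real N * (real N + 1) < \<epsilon>")
  case True
  then show ?thesis
    using ln_inverse_ge_half[OF assms(3,4)] by (simp add: greedy_estimator_def)
next
  case False
  have "real (num_queries orc (greedy_estimator M r N kstar m w P \<epsilon> \<delta>))
      \<le> real (Suc N * sample_size M r N \<epsilon> \<delta> * M)"
    using num_queries_greedy_estimator[OF assms(1) False] by (rule of_nat_mono)
  also have "\<dots> \<le> 10368 * (real M + 1)\<^sup>2 * r\<^sup>2 * real N ^ 6 * ln (1 / \<delta>) / \<epsilon>\<^sup>2"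
    using False assms(2-4) by (intro query_budget_le) auto
  finally show ?thesis .
qed

section \<open>Games with independent choices on small coalitions\<close>

lemma finite_util_class: "finite (util_class kstar A V Alt m)"
proof -
  have "util_class kstar A V Alt m \<subseteq> util kstar A V Alt ` PiE_dflt {..<kstar} 0 (\<lambda>k. {..<m k})"
  proof
    fix U assume "U \<in> util_class kstar A V Alt m"
    then obtain b where b: "valid_choice kstar m b" "U = util kstar A V Alt b"
      unfolding util_class_def by blast
    define b' where "b' = (\<lambda>k. if k < kstar then b k else 0)"
    have "b' \<in> PiE_dflt {..<kstar} 0 (\<lambda>k. {..<m k})"
      using b(1) by (auto simp: b'_def PiE_dflt_def valid_choice_def)
    moreover have "U = util kstar A V Alt b'"
      using b(2) by (auto simp: fun_eq_iff util_def b'_def)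
    ultimately show "U \<in> util kstar A V Alt ` PiE_dflt {..<kstar} 0 (\<lambda>k. {..<m k})"
      by blast
  qed
  moreover have "finite (PiE_dflt {..<kstar} (0::nat) (\<lambda>k. {..<m k}))"
    by (intro finite_PiE_dflt) auto
  ultimately show ?thesis
    using finite_subset by blast
qed

locale small_data_game =
  fixes N kstar :: nat and m :: "nat \<Rightarrow> nat"
    and A :: "nat set \<Rightarrow> 'model" and V :: "'model \<Rightarrow> real" and Alt :: "nat \<Rightarrow> nat \<Rightarrow> nat set \<Rightarrow> 'model"
    and w :: "nat \<Rightarrow> real" and P :: "nat set" and r :: real
  assumes weights: "semivalue_weights N w"
    and behaviours_exist: "\<And>k. k < kstar \<Longrightarrow> 0 < m k"
    and range_bounded: "bounded_range N (util_class kstar A V Alt m) r"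
    and players_in_dataset: "P \<subseteq> {0..<N}"
begin

abbreviation utility :: "(nat \<Rightarrow> nat) \<Rightarrow> nat set \<Rightarrow> real" where
  "utility \<equiv> util kstar A V Alt"

abbreviation favorability :: "(nat \<Rightarrow> nat) \<Rightarrow> real" where
  "favorability b \<equiv> F_agg N w (utility b) P"

abbreviation optimum :: real where
  "optimum \<equiv> Max ((\<lambda>U. F_agg N w U P) ` util_class kstar A V Alt m)"

definition level_gain :: "nat \<Rightarrow> nat \<Rightarrow> real" where
  "level_gain k j =
     (\<Sum>T\<in>coalitions N k. agg_coeff w P T * (utility ((\<lambda>_. 0)(k := j)) T - utility (\<lambda>_. 0) T))"

lemma valid_choice_single: "j < m k \<Longrightarrow> valid_choice kstar m ((\<lambda>_. 0)(k := j))"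
  using behaviours_exist by (simp add: valid_choice_def)

lemma valid_choice_zero: "valid_choice kstar m (\<lambda>_. 0)"
  using behaviours_exist by (simp add: valid_choice_def)

lemma optimum_attained: "\<exists>b. valid_choice kstar m b \<and> optimum = favorability b"
proof -
  have "util_class kstar A V Alt m \<noteq> {}"
    using valid_choice_zero by (auto simp: util_class_def)
  then have "optimum \<in> (\<lambda>U. F_agg N w U P) ` util_class kstar A V Alt m"
    by (intro Max_in finite_imageI finite_util_class) auto
  then show ?thesis
    unfolding util_class_def by blast
qed

lemma favorability_le_optimum: "valid_choice kstar m b \<Longrightarrow> favorability b \<le> optimum"
  by (intro Max_ge finite_imageI finite_util_class) (auto simp: util_class_def)

lemma range_nonneg: "0 \<le> r"
proof -
  have "utility (\<lambda>_. 0) \<in> util_class kstar A V Alt m"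
    using valid_choice_zero by (auto simp: util_class_def)
  then have "utility (\<lambda>_. 0) {} - utility (\<lambda>_. 0) {} \<le> r"
    using range_bounded unfolding bounded_range_def by blast
  then show ?thesis
    by simp
qed

lemma favorability_eq_sum_level_gain:
  "favorability b = favorability (\<lambda>_. 0) + (\<Sum>k<min (Suc N) kstar. level_gain k (b k))"
proof -
  let ?D = "{0..<N}"
  let ?d = "\<lambda>T. agg_coeff w P T * (utility b T - utility (\<lambda>_. 0) T)"
  have "favorability b - favorability (\<lambda>_. 0) = (\<Sum>T\<in>Pow ?D. ?d T)"
    by (simp add: F_agg_eq_sum_agg_coeff[OF players_in_dataset] sum_subtractf right_diff_distrib)
  also have "\<dots> = (\<Sum>k\<le>N. \<Sum>T\<in>coalitions N k. ?d T)"
  proof -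
    have "card T \<le> N" if "T \<subseteq> ?D" for T
      using card_mono[OF _ that] by simp
    then have "(\<Sum>k\<le>N. \<Sum>T\<in>{T\<in>Pow ?D. card T = k}. ?d T) = (\<Sum>T\<in>Pow ?D. ?d T)"
      by (intro sum.group) auto
    moreover have "{T\<in>Pow ?D. card T = k} = coalitions N k" for k
      by (auto simp: coalitions_def)
    ultimately show ?thesis
      by simp
  qed
  also have "\<dots> = (\<Sum>k<min (Suc N) kstar. \<Sum>T\<in>coalitions N k. ?d T)"
  proof (rule sum.mono_neutral_right)
    show "\<forall>k\<in>{..N} - {..<min (Suc N) kstar}. (\<Sum>T\<in>coalitions N k. ?d T) = 0"
      by (auto simp: coalitions_def util_def intro!: sum.neutral)
  qed auto
  also have "\<dots> = (\<Sum>k<min (Suc N) kstar. level_gain k (b k))"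
    by (intro sum.cong refl) (auto simp: level_gain_def coalitions_def util_def)
  finally show ?thesis
    by simp
qed

lemma utility_change_bound:
  assumes "0 < N" "j < m k" "T \<subseteq> {0..<N}"
  shows "\<bar>utility ((\<lambda>_. 0)(k := j)) T - utility (\<lambda>_. 0) T\<bar> \<le> 2 * r"
proof -
  \<comment> \<open>The two utilities agree on every coalition whose size is not k, e.g. on R.\<close>
  define R where "R = (if k = 0 then {0..<N} else {})"
  have R: "R \<subseteq> {0..<N}" "card R \<noteq> k"
    using assms(1) by (auto simp: R_def)
  have agree: "utility ((\<lambda>_. 0)(k := j)) R = utility (\<lambda>_. 0) R"
    using R(2) by (simp add: util_def)
  have "U \<in> util_class kstar A V Alt m" if "U = utility ((\<lambda>_. 0)(k := j)) \<or> U = utility (\<lambda>_. 0)" for U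
    using that valid_choice_single[OF assms(2)] valid_choice_zero by (auto simp: util_class_def)
  then have "\<bar>utility ((\<lambda>_. 0)(k := j)) T - utility ((\<lambda>_. 0)(k := j)) R\<bar> \<le> r"
    "\<bar>utility (\<lambda>_. 0) T - utility (\<lambda>_. 0) R\<bar> \<le> r"
    using range_bounded assms(3) R(1) unfolding bounded_range_def abs_le_iff by (smt (verit))+
  then show ?thesis
    using agree by linarith
qed

lemma gain_term_bound:
  assumes "j < m k" "T \<in> coalitions N k"
  shows "\<bar>gain_term N w P utility k j T\<bar> \<le> 2 * r * real N"
proof (cases "N = 0")
  case True
  then have "P = {}"
    using players_in_dataset by auto
  then show ?thesis
    using True by (simp add: gain_term_def agg_coeff_def)
next
  case False
  have "\<bar>gain_term N w P utility k j T\<bar>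
      = (real (N choose k) * \<bar>agg_coeff w P T\<bar>) * \<bar>utility ((\<lambda>_. 0)(k := j)) T - utility (\<lambda>_. 0) T\<bar>"
    by (simp add: gain_term_def abs_mult)
  also have "\<dots> \<le> real N * (2 * r)"
    using False assms
    by (intro mult_mono binomial_agg_coeff_le[OF weights players_in_dataset] utility_change_bound)
      (auto simp: coalitions_def)
  finally show ?thesis
    by (simp add: mult_ac)
qed

lemma level_gain_eq_expectation:
  assumes "k \<le> N"
  shows "level_gain k j
    = measure_pmf.expectation (pmf_of_set (coalitions N k)) (gain_term N w P utility k j)"
proof -
  have "0 < real (N choose k)"
    using assms by simp
  then show ?thesis
    using coalitions_nonempty[OF assms]
    by (simp add: integral_pmf_of_set card_coalitions level_gain_def gain_term_def mult.assoc
        sum_distrib_left[symmetric])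
qed

lemma level_gain_bound:
  assumes "k \<le> N" "j < m k"
  shows "\<bar>level_gain k j\<bar> \<le> 2 * r * real N"
proof -
  let ?C = "coalitions N k"
  have card_pos: "0 < real (card ?C)"
    using coalitions_nonempty[OF assms(1)] by (simp add: card_gt_0_iff)
  have "\<bar>\<Sum>T\<in>?C. gain_term N w P utility k j T\<bar> \<le> (\<Sum>T\<in>?C. 2 * r * real N)"
    using gain_term_bound[OF assms(2)] by (intro order_trans[OF sum_abs sum_mono]) auto
  then have "\<bar>\<Sum>T\<in>?C. gain_term N w P utility k j T\<bar> / card ?C \<le> 2 * r * real N"
    using card_pos by (simp add: divide_le_eq mult.commute)
  then show ?thesis
    using level_gain_eq_expectation[OF assms(1)] coalitions_nonempty[OF assms(1)]
    by (simp add: integral_pmf_of_set)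
qed

lemma favorability_zero_near_optimal:
  "optimum - favorability (\<lambda>_. 0) \<le> 2 * r * real N * (real N + 1)"
proof -
  obtain b where b: "valid_choice kstar m b" "optimum = favorability b"
    using optimum_attained by blast
  have "level_gain k (b k) \<le> 2 * r * real N" if "k < min (Suc N) kstar" for k
    using level_gain_bound[of k "b k"] that b(1) by (auto simp: valid_choice_def abs_le_iff)
  then have "(\<Sum>k<min (Suc N) kstar. level_gain k (b k)) \<le> (\<Sum>k<min (Suc N) kstar. 2 * r * real N)"
    by (intro sum_mono) auto
  also have "\<dots> = real (min (Suc N) kstar) * (2 * r * real N)"
    by simp
  also have "\<dots> \<le> real (Suc N) * (2 * r * real N)"
    using range_nonneg by (intro mult_right_mono) auto
  finally show ?thesis
    using b(2) favorability_eq_sum_level_gain[of b] by (simp add: algebra_simps)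
qed

lemma empirical_gain_eq_sample_mean:
  fixes L :: nat and \<omega> :: "nat \<times> nat \<Rightarrow> nat set"
  defines "answers \<equiv> \<lambda>q. if q \<in> set (sample_queries N kstar m L \<omega>) then util_oracle N kstar A V Alt m q else 0"
  assumes \<omega>: "\<omega> \<in> coalition_samples N kstar L" and k: "k < min (Suc N) kstar" and j: "j < m k"
  shows "empirical_gain N w P L \<omega> answers k j
    = (\<Sum>x\<in>{k} \<times> {..<L}. gain_term N w P utility k j (\<omega> x)) / L"
proof -
  have answer: "curry answers ((\<lambda>_. 0)(k := i)) (\<omega> (k, l)) = utility ((\<lambda>_. 0)(k := i)) (\<omega> (k, l))"
    if l: "l < L" and i: "i < m k" for l i
  proof -
    have "\<omega> (k, l) \<subseteq> {0..<N}"
      using \<omega> k l by (auto simp: coalition_samples_def PiE_dflt_def coalitions_def)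
    moreover have "((\<lambda>_. 0)(k := i), \<omega> (k, l)) \<in> set (sample_queries N kstar m L \<omega>)"
      using k l i by (force simp: sample_queries_def)
    ultimately show ?thesis
      using valid_choice_single[OF i] by (simp add: answers_def util_oracle_def)
  qed
  have baseline: "(\<lambda>_. 0 :: nat)(k := 0) = (\<lambda>_. 0)"
    by auto
  have "gain_term N w P (curry answers) k j (\<omega> x) = gain_term N w P utility k j (\<omega> x)"
    if "x \<in> {k} \<times> {..<L}" for x
    using that answer[of _ j] answer[of _ 0] j by (auto simp: gain_term_def baseline)
  then show ?thesis
    by (simp add: empirical_gain_def)
qed

lemma sample_mean_deviation_prob:
  fixes L :: nat and \<eta> :: real
  assumes N: "0 < N" and r: "0 < r" and L: "0 < L" and \<eta>: "0 \<le> \<eta>"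
    and k: "k < min (Suc N) kstar" and j: "j < m k"
  shows "measure_pmf.prob (pmf_of_set (coalition_samples N kstar L))
      {\<omega>. \<eta> \<le> \<bar>(\<Sum>x\<in>{k} \<times> {..<L}. gain_term N w P utility k j (\<omega> x)) / L - level_gain k j\<bar>}
    \<le> 2 * exp (- (L * \<eta>\<^sup>2 / (2 * (2 * r * real N)\<^sup>2)))"
proof -
  have kN: "k \<le> N"
    using k by simp
  have "measure_pmf.prob
      (Pi_pmf ({..<min (Suc N) kstar} \<times> {..<L}) {} (\<lambda>x. pmf_of_set (coalitions N (fst x))))
      {\<omega>. \<eta> \<le> \<bar>(\<Sum>x\<in>{k} \<times> {..<L}. gain_term N w P utility k j (\<omega> x)) / card ({k} \<times> {..<L})
        - measure_pmf.expectation (pmf_of_set (coalitions N k)) (gain_term N w P utility k j)\<bar>}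
    \<le> 2 * exp (- (card ({k} \<times> {..<L}) * \<eta>\<^sup>2 / (2 * (2 * r * real N)\<^sup>2)))"
    using k L N r \<eta> gain_term_bound[OF j] coalitions_nonempty[OF kN]
    by (intro Pi_pmf_sample_mean_deviation) auto
  then show ?thesis
    by (simp add: pmf_of_set_coalition_samples level_gain_eq_expectation[OF kN])
qed

lemma sample_means_accurate:
  fixes L M :: nat and \<eta> :: real
  assumes N: "0 < N" and r: "0 < r" and L: "0 < L" and \<eta>: "0 \<le> \<eta>"
    and M: "\<And>k. k < kstar \<Longrightarrow> m k \<le> M"
  shows "measure_pmf.prob (pmf_of_set (coalition_samples N kstar L))
      {\<omega>. \<exists>k<min (Suc N) kstar. \<exists>j<m k.
         \<eta> \<le> \<bar>(\<Sum>x\<in>{k} \<times> {..<L}. gain_term N w P utility k j (\<omega> x)) / L - level_gain k j\<bar>}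
    \<le> real ((N + 1) * M) * (2 * exp (- (L * \<eta>\<^sup>2 / (2 * (2 * r * real N)\<^sup>2))))"
proof -
  define Q where "Q = pmf_of_set (coalition_samples N kstar L)"
  define S where "S = Sigma {..<min (Suc N) kstar} (\<lambda>k. {..<m k})"
  define bad where "bad = (\<lambda>(k, j). {\<omega>.
      \<eta> \<le> \<bar>(\<Sum>x\<in>{k} \<times> {..<L}. gain_term N w P utility k j (\<omega> x)) / L - level_gain k j\<bar>})"
  define p where "p = 2 * exp (- (L * \<eta>\<^sup>2 / (2 * (2 * r * real N)\<^sup>2)))"
  have card_S: "card S \<le> (N + 1) * M"
  proof -
    have "card S = (\<Sum>k<min (Suc N) kstar. m k)"
      unfolding S_def by simp
    also have "\<dots> \<le> (\<Sum>k<min (Suc N) kstar. M)"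
      using M by (intro sum_mono) auto
    also have "\<dots> = min (Suc N) kstar * M"
      by simp
    also have "\<dots> \<le> (N + 1) * M"
      by (rule mult_le_mono1) simp
    finally show ?thesis .
  qed
  have event: "{\<omega>. \<exists>k<min (Suc N) kstar. \<exists>j<m k.
      \<eta> \<le> \<bar>(\<Sum>x\<in>{k} \<times> {..<L}. gain_term N w P utility k j (\<omega> x)) / L - level_gain k j\<bar>}
      = (\<Union>s\<in>S. bad s)"
    by (fastforce simp: S_def bad_def)
  have "measure_pmf.prob Q (\<Union>s\<in>S. bad s) \<le> (\<Sum>s\<in>S. measure_pmf.prob Q (bad s))"
    by (rule measure_pmf.finite_measure_subadditive_finite) (auto simp: S_def)
  also have "\<dots> \<le> (\<Sum>s\<in>S. p)"
    using sample_mean_deviation_prob[OF N r L \<eta>] by (intro sum_mono) (auto simp: S_def bad_def Q_def p_def)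
  also have "\<dots> = real (card S) * p"
    by simp
  also have "\<dots> \<le> real ((N + 1) * M) * p"
    using card_S by (intro mult_right_mono of_nat_mono) (auto simp: p_def)
  finally show ?thesis
    by (simp only: event Q_def p_def)
qed

lemma greedy_choice_near_optimal:
  fixes L :: nat and \<omega> :: "nat \<times> nat \<Rightarrow> nat set"
  defines "answers \<equiv> \<lambda>q. if q \<in> set (sample_queries N kstar m L \<omega>) then util_oracle N kstar A V Alt m q else 0"
  assumes \<omega>: "\<omega> \<in> coalition_samples N kstar L" and \<eta>: "0 \<le> \<eta>"
    and accurate: "\<And>k j. k < min (Suc N) kstar \<Longrightarrow> j < m k \<Longrightarrow>
      \<bar>(\<Sum>x\<in>{k} \<times> {..<L}. gain_term N w P utility k j (\<omega> x)) / L - level_gain k j\<bar> \<le> \<eta>"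
  shows "optimum - favorability (greedy_choice N m w P L \<omega> answers) \<le> 2 * \<eta> * (real N + 1)"
proof -
  let ?K = "{..<min (Suc N) kstar}"
  let ?g = "greedy_choice N m w P L \<omega> answers"
  let ?e = "empirical_gain N w P L \<omega> answers"
  obtain b where b: "valid_choice kstar m b" "optimum = favorability b"
    using optimum_attained by blast
  have "optimum - favorability ?g = (\<Sum>k\<in>?K. level_gain k (b k)) - (\<Sum>k\<in>?K. level_gain k (?g k))"
    using b(2) favorability_eq_sum_level_gain[of b] favorability_eq_sum_level_gain[of ?g] by simp
  also have "\<dots> \<le> 2 * \<eta> * card ?K"
  proof (rule sum_greedy_choice_near_optimal[where g = level_gain and b = b and b' = ?g
        and C = "\<lambda>k. {..<m k}" and e = ?e])
    fix k assume k: "k \<in> ?K"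
    then have m: "0 < m k"
      using behaviours_exist by simp
    show "b k \<in> {..<m k}"
      using b(1) k by (simp add: valid_choice_def)
    show "?g k \<in> {..<m k}"
      using m unfolding greedy_choice_def by (intro arg_max_on_in) auto
    fix j assume j: "j \<in> {..<m k}"
    show "?e k j \<le> ?e k (?g k)"
      using m j unfolding greedy_choice_def by (intro arg_max_on_greatest) auto
    show "\<bar>?e k j - level_gain k j\<bar> \<le> \<eta>"
      using accurate k j \<omega> by (simp add: answers_def empirical_gain_eq_sample_mean)
  qed
  also have "\<dots> \<le> 2 * \<eta> * (real N + 1)"
    using \<eta> by (intro mult_left_mono) auto
  finally show ?thesis .
qed

lemma nontrivial_precision_positive:
  assumes "0 < \<epsilon>" "\<epsilon> \<le> 2 * r * real N * (real N + 1)"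
  shows "0 < N" "0 < r"
proof -
  have "0 < 2 * r * real N * (real N + 1)"
    using assms by linarith
  then show "0 < N" "0 < r"
    using range_nonneg by (auto simp: zero_less_mult_iff)
qed

lemma sample_means_accurate_whp:
  fixes M :: nat and \<epsilon> \<delta> :: real
  assumes M: "\<And>k. k < kstar \<Longrightarrow> m k \<le> M"
    and \<epsilon>: "0 < \<epsilon>" "\<epsilon> \<le> 2 * r * real N * (real N + 1)" and \<delta>: "0 < \<delta>" "\<delta> \<le> 1/2"
  defines "L \<equiv> sample_size M r N \<epsilon> \<delta>" and "\<eta> \<equiv> \<epsilon> / (4 * (real N + 1))"
  shows "measure_pmf.prob (pmf_of_set (coalition_samples N kstar L))
      {\<omega>. \<exists>k<min (Suc N) kstar. \<exists>j<m k.
         \<eta> \<le> \<bar>(\<Sum>x\<in>{k} \<times> {..<L}. gain_term N w P utility k j (\<omega> x)) / L - level_gain k j\<bar>}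
    \<le> \<delta>"
proof -
  have N: "0 < N" and r: "0 < r"
    using nontrivial_precision_positive[OF \<epsilon>] by auto
  have "measure_pmf.prob (pmf_of_set (coalition_samples N kstar L))
      {\<omega>. \<exists>k<min (Suc N) kstar. \<exists>j<m k.
         \<eta> \<le> \<bar>(\<Sum>x\<in>{k} \<times> {..<L}. gain_term N w P utility k j (\<omega> x)) / L - level_gain k j\<bar>}
    \<le> real ((N + 1) * M) * (2 * exp (- (L * \<eta>\<^sup>2 / (2 * (2 * r * real N)\<^sup>2))))"
    using sample_size_pos[OF \<epsilon>(1) r N \<delta>] N r \<epsilon> M
    by (intro sample_means_accurate) (auto simp: L_def \<eta>_def)
  also have "\<dots> \<le> real ((N + 1) * M) * (\<delta> / ((real N + 1) * (real M + 1)))"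
    using sample_size_tail_le[OF \<epsilon>(1) r N \<delta>(1)] by (intro mult_left_mono) (auto simp: L_def \<eta>_def)
  also have "\<dots> \<le> ((real N + 1) * (real M + 1)) * (\<delta> / ((real N + 1) * (real M + 1)))"
    using \<delta> by (intro mult_right_mono) (auto simp: algebra_simps)
  also have "\<dots> = \<delta>"
    by simp
  finally show ?thesis .
qed

lemma greedy_estimator_accurate:
  fixes M :: nat and \<epsilon> \<delta> :: real
  assumes M: "\<And>k. k < kstar \<Longrightarrow> m k \<le> M" and \<epsilon>: "0 < \<epsilon>" and \<delta>: "0 < \<delta>" "\<delta> \<le> 1/2"
  shows "1 - \<delta> \<le> measure_pmf.prob
      (run_alg (util_oracle N kstar A V Alt m) (greedy_estimator M r N kstar m w P \<epsilon> \<delta>))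
      {b. \<bar>favorability b - optimum\<bar> < \<epsilon>}"
proof (cases "2 * r * real N * (real N + 1) < \<epsilon>")
  case True
  then have "\<bar>favorability (\<lambda>_. 0) - optimum\<bar> < \<epsilon>"
    using favorability_zero_near_optimal favorability_le_optimum[OF valid_choice_zero] by linarith
  then show ?thesis
    using True \<delta> by (simp add: greedy_estimator_def)
next
  case False
  define L where "L = sample_size M r N \<epsilon> \<delta>"
  define \<eta> where "\<eta> = \<epsilon> / (4 * (real N + 1))"
  define Q where "Q = pmf_of_set (coalition_samples N kstar L)"
  define answers where "answers = (\<lambda>\<omega> q. if q \<in> set (sample_queries N kstar m L \<omega>)
      then util_oracle N kstar A V Alt m q else 0)"
  define bad where "bad = {\<omega>. \<exists>k<min (Suc N) kstar. \<exists>j<m k.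
      \<eta> \<le> \<bar>(\<Sum>x\<in>{k} \<times> {..<L}. gain_term N w P utility k j (\<omega> x)) / L - level_gain k j\<bar>}"
  have bad_prob: "measure_pmf.prob Q bad \<le> \<delta>"
    unfolding Q_def bad_def L_def \<eta>_def using False \<epsilon> \<delta> M by (intro sample_means_accurate_whp) auto
  have good: "\<bar>favorability (greedy_choice N m w P L \<omega> (answers \<omega>)) - optimum\<bar> < \<epsilon>"
    if "\<omega> \<in> set_pmf Q" "\<omega> \<notin> bad" for \<omega>
  proof -
    have "\<omega> \<in> coalition_samples N kstar L"
      using that(1) by (simp add: Q_def finite_coalition_samples coalition_samples_nonempty)
    then have "optimum - favorability (greedy_choice N m w P L \<omega> (answers \<omega>)) \<le> 2 * \<eta> * (real N + 1)"
      using that(2) \<epsilon> unfolding answers_def bad_def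
      by (intro greedy_choice_near_optimal) (auto simp: not_le \<eta>_def intro: less_imp_le)
    moreover have "favorability (greedy_choice N m w P L \<omega> (answers \<omega>)) \<le> optimum"
      using behaviours_exist by (intro favorability_le_optimum greedy_choice_valid)
    moreover have "2 * \<eta> * (real N + 1) = \<epsilon> / 2"
      by (simp add: \<eta>_def field_simps)
    ultimately show ?thesis
      using \<epsilon> by linarith
  qed
  have "1 - \<delta> \<le> measure_pmf.prob (map_pmf (\<lambda>\<omega>. greedy_choice N m w P L \<omega> (answers \<omega>)) Q)
      {b. \<bar>favorability b - optimum\<bar> < \<epsilon>}"
    using good by (intro measure_map_pmf_ge_of_exception[OF bad_prob]) auto
  then show ?thesis
    using False by (simp add: run_greedy_estimator L_def Q_def answers_def)
qed

end

theorem proposition2: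
  fixes M :: nat and r :: real
  shows "\<exists>(Alg :: nat \<Rightarrow> nat \<Rightarrow> (nat \<Rightarrow> nat) \<Rightarrow> (nat \<Rightarrow> real) \<Rightarrow> nat set \<Rightarrow> real \<Rightarrow> real
                  \<Rightarrow> ((nat \<Rightarrow> nat) \<times> nat set, nat \<Rightarrow> nat) qalg) (C :: real) (d :: nat).
    \<forall>N kstar m w P \<epsilon> \<delta> (A :: nat set \<Rightarrow> 'm) V Alt.
      semivalue_weights N w \<and>
      (\<forall>k<kstar. 1 \<le> m k \<and> m k \<le> M) \<and>
      bounded_range N (util_class kstar A V Alt m) r \<and>
      P \<subseteq> {0..<N} \<and> 0 < \<epsilon> \<and> 0 < \<delta> \<and> \<delta> \<le> 1/2
      \<longrightarrow>
      (let orc = util_oracle N kstar A V Alt m;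
           alg = Alg N kstar m w P \<epsilon> \<delta>;
           p = run_alg orc alg;
           opt = Max ((\<lambda>U. F_agg N w U P) ` util_class kstar A V Alt m)
       in (\<forall>b\<in>set_pmf p. valid_choice kstar m b) \<and>
          real (num_queries orc alg) \<le> C * real N ^ d * ln (1 / \<delta>) / \<epsilon>\<^sup>2 \<and>
          measure_pmf.prob p
            {b. \<bar>F_agg N w (util kstar A V Alt b) P - opt\<bar> < \<epsilon>} \<ge> 1 - \<delta>)"
  apply (intro exI[of _ "greedy_estimator M r"] exI[of _ "10368 * (real M + 1)\<^sup>2 * r\<^sup>2"]
      exI[of _ "6::nat"] allI impI)
  subgoal premises hyps for N kstar m w P \<epsilon> \<delta> A V Alt
  proof -
    interpret small_data_game N kstar m A V Alt w P r
      using hyps by unfold_locales auto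
    have bounds: "\<And>k. k < kstar \<Longrightarrow> m k \<le> M" "0 < \<epsilon>" "0 < \<delta>" "\<delta> \<le> 1/2"
      using hyps by auto
    show ?thesis
      unfolding Let_def
      by (intro conjI ballI greedy_estimator_valid[of kstar m] num_queries_greedy_estimator_le
          greedy_estimator_accurate) (use behaviours_exist bounds in auto)
  qed
  done

end
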